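(* Let $m$ be odd and $0\le r\le (m-1)/2$. Let $\mathcal{G}=\mathcal{G}(m,r)$ be the set of column vectors $\varphi_{P,b}$, indexed by $x\in\mathbb{F}_2^m$, given by $$\varphi_{P,b}(x)=i^{\,wt(d_P)+2wt(b)}\,i^{\,xPx^\top+2bx^\top},$$ where $b$ ranges over $\mathbb{F}_2^m$ and the binary symmetric matrix $P$ ranges over the Delsarte–Goethals set $DG(m,r)$. Then $\mathcal{G}$ is a group of order $2^{(r+2)m}$ under pointwise multiplication.
   Context: Here $i=\sqrt{-1}$. $DG(m,r)$ is the Delsarte–Goethals set: a binary vector space (over $\mathbb{F}_2$) of $2^{(r+1)m}$ binary symmetric $m\times m$ matrices such that the sum (difference) of any two distinct matrices in it has rank at least $m-2r$ over $\mathbb{F}_2$. For a binary matrix $P$, $d_P$ denotes its main diagonal (a binary vector), and $wt$ denotes Hamming weight (number of 1s). The exponents $xPx^\top+2bx^\top$ and $wt(d_P)+2wt(b)$ are computed in the integers modulo 4, viewing the binary entries as the integers 0 and 1. *)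

theory Defs
  imports "HOL-Analysis.Analysis" "HOL-Library.Z2" "HOL-Algebra.Group"
begin

definition bint :: "bit \<Rightarrow> int" where
  "bint a = (if a = 1 then 1 else 0)"

definition wt :: "bit^'n \<Rightarrow> nat" where
  "wt v = card {j. v $ j = 1}"

definition diag_vec :: "bit^'n^'n \<Rightarrow> bit^'n" where
  "diag_vec P = (\<chi> j. P $ j $ j)"

definition is_DG :: "nat \<Rightarrow> (bit^'n^'n) set \<Rightarrow> bool" where
  "is_DG r D \<longleftrightarrow>
     0 \<in> D \<and> (\<forall>P\<in>D. \<forall>Q\<in>D. P + Q \<in> D) \<and>
     (\<forall>P\<in>D. transpose P = P) \<and>
     card D = 2 ^ ((r + 1) * CARD('n)) \<and>
     (\<forall>P\<in>D. \<forall>Q\<in>D. P \<noteq> Q \<longrightarrow> rank (P + Q) \<ge> CARD('n) - 2 * r)"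

definition phi :: "bit^'n^'n \<Rightarrow> bit^'n \<Rightarrow> bit^'n \<Rightarrow> complex" where
  "phi P b x =
     \<i> ^ nat ((int (wt (diag_vec P)) + 2 * int (wt b)) mod 4) *
     \<i> ^ nat (((\<Sum>j\<in>UNIV. \<Sum>k\<in>UNIV. bint (x $ j) * bint (P $ j $ k) * bint (x $ k))
              + 2 * (\<Sum>j\<in>UNIV. bint (b $ j) * bint (x $ j))) mod 4)"

definition calG :: "(bit^'n^'n) set \<Rightarrow> (bit^'n \<Rightarrow> complex) set" where
  "calG D = {phi P b | P b. P \<in> D}"

definition pointwise_group ::
    "('a \<Rightarrow> complex) set \<Rightarrow> ('a \<Rightarrow> complex) monoid" where
  "pointwise_group G = \<lparr>carrier = G, mult = (\<lambda>f g x. f x * g x), one = (\<lambda>x. 1)\<rparr>"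

end

theory Submission
  imports Defs "HOL-Number_Theory.Cong"
begin

text \<open>Since a + b = a + b - 2ab
  for bits read as integers, phi_{P,b} phi_{Q,c} = phi_{P+Q, b+c+d_P \<circ> d_Q}: the cross terms
  are multiples of 4 once one uses the symmetry of P and Q and x_j^2 = x_j. Hence G is closed
  under multiplication, contains phi_{0,0} = 1 and has exponent 4, so it is a group.
  Evaluating the exponent mod 4 at x = 0, e_j and e_j + e_k recovers wt(d_P) + 2 wt(b), then
  d_P and b, then the off-diagonal entries of P; so (P, b) \<mapsto> phi_{P,b} is injective and
  |G| = |DG(m,r)| 2^m.\<close>

lemma bit_eq_0_or_1: "(a::bit) = 0 \<or> a = 1"
  by (cases a) auto

lemma CARD_bit: "CARD(bit) = 2"
proof -
  have UNIV_bit: "(UNIV :: bit set) = {0, 1}"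
    using bit_eq_0_or_1 by auto
  show ?thesis
    unfolding UNIV_bit by simp
qed

lemma bint_0_or_1: "bint a = 0 \<or> bint a = 1"
  by (simp add: bint_def)

lemma bint_inject: "bint a = bint b \<longleftrightarrow> a = b"
  using bit_eq_0_or_1[of a] bit_eq_0_or_1[of b] by (auto simp: bint_def)

lemma bint_0 [simp]: "bint 0 = 0"
  by (simp add: bint_def)

lemma bint_add: "bint (a + b) = bint a + bint b - 2 * bint a * bint b"
  using bit_eq_0_or_1[of a] bit_eq_0_or_1[of b] by (auto simp: bint_def)

lemma bint_mult: "bint (a * b) = bint a * bint b"
  using bit_eq_0_or_1[of a] bit_eq_0_or_1[of b] by (auto simp: bint_def)

lemma bint_idem: "bint a * bint a = bint a"
  using bit_eq_0_or_1[of a] by (auto simp: bint_def)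

definition i_pow :: "int \<Rightarrow> complex" where
  "i_pow a = \<i> ^ nat (a mod 4)"

lemma i_pow_0 [simp]: "i_pow 0 = 1"
  by (simp add: i_pow_def)

lemma i_power_mod_4: "\<i> ^ n = \<i> ^ (n mod 4)"
proof -
  have "\<i> ^ n = (\<i> ^ 4) ^ (n div 4) * \<i> ^ (n mod 4)"
    by (metis mult_div_mod_eq power_add power_mult)
  then show ?thesis by simp
qed

lemma i_pow_add: "i_pow (a + b) = i_pow a * i_pow b"
proof -
  have "int ((nat (a mod 4) + nat (b mod 4)) mod 4) = (a + b) mod 4"
    by (simp add: zmod_int mod_add_eq)
  then have "nat ((a + b) mod 4) = (nat (a mod 4) + nat (b mod 4)) mod 4"
    by linarith
  then show ?thesis
    by (metis i_pow_def i_power_mod_4 power_add)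
qed

lemma i_pow_eq_iff: "i_pow a = i_pow b \<longleftrightarrow> [a = b] (mod 4)"
proof
  assume "[a = b] (mod 4)"
  then show "i_pow a = i_pow b"
    by (simp add: i_pow_def cong_def)
next
  have small: "n < 4 \<Longrightarrow> n = 0 \<or> n = 1 \<or> n = 2 \<or> n = (3::nat)" for n
    by auto
  assume "i_pow a = i_pow b"
  moreover have "nat (a mod 4) < 4" "nat (b mod 4) < 4"
    by auto
  ultimately have "nat (a mod 4) = nat (b mod 4)"
    unfolding i_pow_def
    using small[of "nat (a mod 4)"] small[of "nat (b mod 4)"]
    by (auto simp: power2_eq_square power3_eq_cube complex_eq_iff)
  then show "[a = b] (mod 4)"
    by (simp add: cong_def)
qed

lemma i_pow_power_4: "i_pow a ^ 4 = 1"
proof -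
  have "i_pow a ^ 4 = i_pow (4 * a)"
    by (simp add: i_pow_add[symmetric] power_numeral_reduce algebra_simps)
  also have "\<dots> = 1"
    using i_pow_eq_iff[of "4 * a" 0] by (simp add: cong_def)
  finally show ?thesis .
qed

definition bdot :: "bit^'n \<Rightarrow> bit^'n \<Rightarrow> int" where
  "bdot b x = (\<Sum>j\<in>UNIV. bint (b $ j) * bint (x $ j))"

definition qform :: "bit^'n^'n \<Rightarrow> bit^'n \<Rightarrow> int" where
  "qform P x = (\<Sum>j\<in>UNIV. \<Sum>k\<in>UNIV. bint (x $ j) * bint (P $ j $ k) * bint (x $ k))"

lemma wt_eq_sum_bint: "int (wt v) = (\<Sum>j\<in>UNIV. bint (v $ j))"
  by (simp add: wt_def bint_def sum.If_cases)

lemma wt_add: "int (wt (u + v)) = int (wt u) + int (wt v) - 2 * int (wt (u * v))"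
  unfolding wt_eq_sum_bint vector_add_component vector_mult_component bint_add bint_mult
  by (simp add: sum.distrib sum_subtractf sum_distrib_left mult.assoc)

lemma bdot_add: "bdot (u + v) x = bdot u x + bdot v x - 2 * bdot (u * v) x"
  unfolding bdot_def vector_add_component vector_mult_component bint_add bint_mult
  by (simp add: sum.distrib sum_subtractf sum_distrib_left algebra_simps)

lemma diag_vec_add: "diag_vec (P + Q) = diag_vec P + diag_vec Q"
  by (simp add: diag_vec_def vec_eq_iff)

lemma symmetric_entry: "transpose P = P \<Longrightarrow> P $ j $ k = P $ k $ j"
  by (metis transpose_def vec_lambda_beta)

lemma sum_symmetric_cong_diag:
  fixes f :: "'a \<Rightarrow> 'a \<Rightarrow> int"
  assumes "finite A" and "\<And>j k. f j k = f k j"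
  shows "[(\<Sum>j\<in>A. \<Sum>k\<in>A. f j k) = (\<Sum>j\<in>A. f j j)] (mod 2)"
  using assms(1)
proof (induction A rule: finite_induct)
  case empty
  then show ?case by simp
next
  case (insert a A)
  have "(\<Sum>j\<in>insert a A. \<Sum>k\<in>insert a A. f j k)
      = f a a + 2 * (\<Sum>k\<in>A. f a k) + (\<Sum>j\<in>A. \<Sum>k\<in>A. f j k)"
    using insert assms(2) by (simp add: sum.distrib)
  also have "[\<dots> = f a a + 0 + (\<Sum>j\<in>A. f j j)] (mod 2)"
    by (intro cong_add insert.IH cong_refl) (simp add: cong_0_iff)
  finally show ?case
    using insert by simp
qed

lemma qform_add:
  assumes "transpose P = P" and "transpose Q = Q"
  shows "[qform (P + Q) x = qform P x + qform Q x - 2 * bdot (diag_vec P * diag_vec Q) x] (mod 4)"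
proof -
  define cross where
    "cross j k = bint (x $ j) * (bint (P $ j $ k) * bint (Q $ j $ k)) * bint (x $ k)" for j k
  have expand: "qform (P + Q) x = qform P x + qform Q x - 2 * (\<Sum>j\<in>UNIV. \<Sum>k\<in>UNIV. cross j k)"
  proof -
    have "bint (x $ j) * bint ((P + Q) $ j $ k) * bint (x $ k)
        = bint (x $ j) * bint (P $ j $ k) * bint (x $ k)
          + bint (x $ j) * bint (Q $ j $ k) * bint (x $ k) - 2 * cross j k" for j k
      unfolding cross_def vector_add_component bint_add by (simp add: algebra_simps)
    then show ?thesis
      by (simp add: qform_def sum.distrib sum_subtractf sum_distrib_left)
  qed
  have cross_diag: "cross j j = bint ((diag_vec P * diag_vec Q) $ j) * bint (x $ j)" for j
  proof -
    have "cross j j = bint (P $ j $ j) * bint (Q $ j $ j) * (bint (x $ j) * bint (x $ j))"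
      by (simp add: cross_def mult_ac)
    then show ?thesis
      unfolding diag_vec_def vector_mult_component vec_lambda_beta bint_mult bint_idem .
  qed
  have "[(\<Sum>j\<in>UNIV. \<Sum>k\<in>UNIV. cross j k) = (\<Sum>j\<in>UNIV. cross j j)] (mod 2)"
    by (rule sum_symmetric_cong_diag)
      (simp_all add: cross_def symmetric_entry[OF assms(1)] symmetric_entry[OF assms(2)])
  then have "[(\<Sum>j\<in>UNIV. \<Sum>k\<in>UNIV. cross j k) = bdot (diag_vec P * diag_vec Q) x] (mod 2)"
    by (simp add: cross_diag bdot_def)
  then have "[2 * (\<Sum>j\<in>UNIV. \<Sum>k\<in>UNIV. cross j k) = 2 * bdot (diag_vec P * diag_vec Q) x] (mod 4)"
    using cong_cmult_leftI[of _ _ 2 2] by simp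
  then show ?thesis
    unfolding expand by (intro cong_diff cong_refl)
qed

definition phi_exponent :: "bit^'n^'n \<Rightarrow> bit^'n \<Rightarrow> bit^'n \<Rightarrow> int" where
  "phi_exponent P b x = int (wt (diag_vec P)) + 2 * int (wt b) + qform P x + 2 * bdot b x"

lemma phi_eq_i_pow: "phi P b x = i_pow (phi_exponent P b x)"
proof -
  have "phi P b x = i_pow (int (wt (diag_vec P)) + 2 * int (wt b)) * i_pow (qform P x + 2 * bdot b x)"
    unfolding phi_def i_pow_def qform_def bdot_def ..
  then show ?thesis
    by (simp add: phi_exponent_def i_pow_add add.assoc)
qed

text \<open>The correction d_P \<circ> d_Q added to b cancels the term -2 x (d_P \<circ> d_Q)^T in the
  quadratic part, and contributes 2 wt(d_P \<circ> d_Q) to the constant, cancelling the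
  -2 wt(d_P \<circ> d_Q) in wt(d_{P+Q}).\<close>
lemma phi_exponent_add:
  assumes "transpose P = P" and "transpose Q = Q"
  shows "[phi_exponent (P + Q) (b + c + diag_vec P * diag_vec Q) x
          = phi_exponent P b x + phi_exponent Q c x] (mod 4)"
proof -
  define d where "d = diag_vec P * diag_vec Q"
  obtain k where "qform P x + qform Q x - 2 * bdot d x = qform (P + Q) x + 4 * k"
    using qform_add[OF assms, of x] unfolding d_def cong_iff_lin by blast
  then have k: "qform (P + Q) x = qform P x + qform Q x - 2 * bdot d x - 4 * k"
    by simp
  have exact: "phi_exponent (P + Q) (b + c + d) x = phi_exponent P b x + phi_exponent Q c x
      + 4 * (- k - int (wt (b * c)) - int (wt ((b + c) * d)) - bdot (b * c) x - bdot ((b + c) * d) x)"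
    unfolding phi_exponent_def diag_vec_add wt_add bdot_add k d_def[symmetric]
    by (simp add: algebra_simps)
  show ?thesis
    unfolding d_def[symmetric] exact by (simp only: cong_add_lcancel_0 cong_mult_self_left)
qed

lemma phi_mult:
  assumes "transpose P = P" and "transpose Q = Q"
  shows "phi P b x * phi Q c x = phi (P + Q) (b + c + diag_vec P * diag_vec Q) x"
  using phi_exponent_add[OF assms, of b c x]
  by (simp add: phi_eq_i_pow i_pow_add[symmetric] i_pow_eq_iff cong_sym)

definition indicator_vec :: "'n set \<Rightarrow> bit^'n" where
  "indicator_vec S = (\<chi> l. if l \<in> S then 1 else 0)"

lemma bint_indicator_vec: "bint (indicator_vec S $ l) = (if l \<in> S then 1 else 0)"
  by (simp add: indicator_vec_def bint_def)

lemma phi_exponent_indicator_vec: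
  fixes S :: "'n::finite set"
  shows "phi_exponent P b (indicator_vec S)
     = int (wt (diag_vec P)) + 2 * int (wt b)
       + (\<Sum>j\<in>S. \<Sum>k\<in>S. bint (P $ j $ k)) + 2 * (\<Sum>j\<in>S. bint (b $ j))"
proof -
  have restrict: "(\<Sum>l\<in>(UNIV :: 'n set). (if l \<in> S then 1 else 0) * f l) = (\<Sum>l\<in>S. f l)"
    for f :: "'n \<Rightarrow> int"
  proof -
    have "(\<Sum>l\<in>UNIV. (if l \<in> S then 1 else 0) * f l) = (\<Sum>l\<in>UNIV. if l \<in> S then f l else 0)"
      by (intro sum.cong) auto
    then show ?thesis
      by (simp add: sum.If_cases)
  qed
  have "qform P (indicator_vec S)
      = (\<Sum>j\<in>UNIV. (if j \<in> S then 1 else 0)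
           * (\<Sum>k\<in>UNIV. (if k \<in> S then 1 else 0) * bint (P $ j $ k)))"
    by (simp add: qform_def bint_indicator_vec sum_distrib_left algebra_simps)
  moreover have "bdot b (indicator_vec S) = (\<Sum>j\<in>UNIV. (if j \<in> S then 1 else 0) * bint (b $ j))"
    by (simp add: bdot_def bint_indicator_vec mult.commute)
  ultimately show ?thesis
    by (simp add: phi_exponent_def restrict)
qed

lemma phi_injective:
  assumes sym_P: "transpose P = P" and sym_Q: "transpose Q = Q" and "phi P b = phi Q c"
  shows "P = Q \<and> b = c"
proof -
  have exponents: "[phi_exponent P b x = phi_exponent Q c x] (mod 4)" for x
    using \<open>phi P b = phi Q c\<close> by (metis phi_eq_i_pow i_pow_eq_iff)
  have on_sets: "[(\<Sum>j\<in>S. \<Sum>k\<in>S. bint (P $ j $ k)) + 2 * (\<Sum>j\<in>S. bint (b $ j))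
      = (\<Sum>j\<in>S. \<Sum>k\<in>S. bint (Q $ j $ k)) + 2 * (\<Sum>j\<in>S. bint (c $ j))] (mod 4)" for S
  proof -
    let ?cP = "int (wt (diag_vec P)) + 2 * int (wt b)"
      and ?cQ = "int (wt (diag_vec Q)) + 2 * int (wt c)"
    let ?sQ = "(\<Sum>j\<in>S. \<Sum>k\<in>S. bint (Q $ j $ k)) + 2 * (\<Sum>j\<in>S. bint (c $ j))"
    have constants: "[?cP = ?cQ] (mod 4)"
      using exponents[of "indicator_vec {}"] by (simp add: phi_exponent_indicator_vec)
    have "[?cP + ((\<Sum>j\<in>S. \<Sum>k\<in>S. bint (P $ j $ k)) + 2 * (\<Sum>j\<in>S. bint (b $ j))) = ?cQ + ?sQ] (mod 4)"
      using exponents[of "indicator_vec S"] by (simp add: phi_exponent_indicator_vec add.assoc)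
    also have "[?cQ + ?sQ = ?cP + ?sQ] (mod 4)"
      using constants by (rule cong_add[OF cong_sym cong_refl])
    finally show ?thesis
      by (simp only: cong_add_lcancel)
  qed
  have diag: "bint (P $ j $ j) = bint (Q $ j $ j) \<and> bint (b $ j) = bint (c $ j)" for j
    using on_sets[of "{j}"] bint_0_or_1[of "P $ j $ j"] bint_0_or_1[of "Q $ j $ j"]
      bint_0_or_1[of "b $ j"] bint_0_or_1[of "c $ j"]
    by (auto simp: cong_def)
  have off_diag: "bint (P $ j $ k) = bint (Q $ j $ k)" if "j \<noteq> k" for j k
  proof -
    have "[bint (P $ j $ j) + bint (P $ k $ k) + 2 * bint (P $ j $ k) + 2 * (bint (b $ j) + bint (b $ k))
        = bint (Q $ j $ j) + bint (Q $ k $ k) + 2 * bint (Q $ j $ k) + 2 * (bint (c $ j) + bint (c $ k))]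
        (mod 4)"
      using on_sets[of "{j, k}"] that symmetric_entry[OF sym_P, of k j] symmetric_entry[OF sym_Q, of k j]
      by (simp add: algebra_simps)
    then have "[2 * bint (P $ j $ k) = 2 * bint (Q $ j $ k)] (mod 4)"
      using diag[of j] diag[of k] by (simp add: cong_add_lcancel cong_add_rcancel)
    then show ?thesis
      using bint_0_or_1[of "P $ j $ k"] bint_0_or_1[of "Q $ j $ k"] by (auto simp: cong_def)
  qed
  have "P $ j $ k = Q $ j $ k" for j k
    using diag[of j] off_diag[of j k] by (cases "j = k") (auto simp: bint_inject)
  moreover have "b $ j = c $ j" for j
    using diag[of j] by (simp add: bint_inject)
  ultimately show ?thesis
    by (simp add: vec_eq_iff)
qed

lemma group_pointwise_groupI:
  assumes one: "(\<lambda>x. 1) \<in> G"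
    and mult: "\<And>f g. f \<in> G \<Longrightarrow> g \<in> G \<Longrightarrow> (\<lambda>x. f x * g x) \<in> G"
    and torsion: "\<And>f x. f \<in> G \<Longrightarrow> f x ^ n = 1" and "n > 0"
  shows "group (pointwise_group G)"
proof -
  have powers: "(\<lambda>x. f x ^ k) \<in> G" if "f \<in> G" for f k
    using one by (induction k) (auto intro: mult[OF that])
  show ?thesis
  proof (rule groupI)
    fix f
    assume "f \<in> carrier (pointwise_group G)"
    then have "f \<in> G"
      by (simp add: pointwise_group_def)
    have "f x ^ (n - 1) * f x = 1" for x
      using torsion[OF \<open>f \<in> G\<close>, of x] \<open>n > 0\<close> by (simp add: power_Suc2[symmetric])
    then have "(\<lambda>x. f x ^ (n - 1)) \<otimes>\<^bsub>pointwise_group G\<^esub> f = \<one>\<^bsub>pointwise_group G\<^esub>"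
      by (simp add: pointwise_group_def)
    moreover have "(\<lambda>x. f x ^ (n - 1)) \<in> carrier (pointwise_group G)"
      using powers[OF \<open>f \<in> G\<close>] by (simp add: pointwise_group_def)
    ultimately show "\<exists>g\<in>carrier (pointwise_group G). g \<otimes>\<^bsub>pointwise_group G\<^esub> f = \<one>\<^bsub>pointwise_group G\<^esub>"
      by blast
  qed (simp_all add: pointwise_group_def one mult mult.assoc)
qed

lemma phi_zero: "phi 0 0 = (\<lambda>x. 1)"
  by (simp add: fun_eq_iff phi_eq_i_pow phi_exponent_def wt_def diag_vec_def qform_def bdot_def)

lemma group_calG:
  assumes "0 \<in> D" and add_closed: "\<And>P Q. P \<in> D \<Longrightarrow> Q \<in> D \<Longrightarrow> P + Q \<in> D"
    and symmetric: "\<And>P. P \<in> D \<Longrightarrow> transpose P = P"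
  shows "group (pointwise_group (calG D))"
proof (rule group_pointwise_groupI[where n = 4])
  show "(\<lambda>x. 1) \<in> calG D"
    unfolding calG_def phi_zero[symmetric] using \<open>0 \<in> D\<close> by blast
next
  fix f g
  assume "f \<in> calG D" "g \<in> calG D"
  then obtain P b Q c where "f = phi P b" "g = phi Q c" "P \<in> D" "Q \<in> D"
    unfolding calG_def by blast
  then have "(\<lambda>x. f x * g x) = phi (P + Q) (b + c + diag_vec P * diag_vec Q)"
    by (simp add: fun_eq_iff phi_mult symmetric)
  then show "(\<lambda>x. f x * g x) \<in> calG D"
    unfolding calG_def using add_closed \<open>P \<in> D\<close> \<open>Q \<in> D\<close> by blast
next
  fix f x
  assume "f \<in> calG D"
  then obtain P b where "f = phi P b"
    unfolding calG_def by blast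
  then show "f x ^ 4 = 1"
    by (simp add: phi_eq_i_pow i_pow_power_4)
qed simp

lemma card_calG:
  fixes D :: "(bit^'n^'n) set"
  assumes symmetric: "\<And>P. P \<in> D \<Longrightarrow> transpose P = P"
  shows "card (calG D) = card D * 2 ^ CARD('n)"
proof -
  have "calG D = (\<lambda>(P, b). phi P b) ` (D \<times> UNIV)"
    unfolding calG_def by auto
  moreover have "inj_on (\<lambda>(P, b). phi P b) (D \<times> UNIV)"
    using phi_injective[OF symmetric symmetric] by (auto simp: inj_on_def)
  ultimately have "card (calG D) = card D * CARD(bit^'n)"
    by (simp add: card_image card_cartesian_product)
  then show ?thesis
    by (simp add: CARD_bit)
qed

theorem propositionA1:
  fixes D :: "(bit^'n^'n) set" and r :: nat
  assumes "odd CARD('n)"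
    and "r \<le> (CARD('n) - 1) div 2"
    and "is_DG r D"
  shows "group (pointwise_group (calG D)) \<and> card (calG D) = 2 ^ ((r + 2) * CARD('n))"
proof
  have zero: "0 \<in> D" and add_closed: "\<And>P Q. P \<in> D \<Longrightarrow> Q \<in> D \<Longrightarrow> P + Q \<in> D"
    and symmetric: "\<And>P. P \<in> D \<Longrightarrow> transpose P = P"
    and card_D: "card D = 2 ^ ((r + 1) * CARD('n))"
    using \<open>is_DG r D\<close> unfolding is_DG_def by auto
  show "group (pointwise_group (calG D))"
    using group_calG[OF zero add_closed symmetric] .
  show "card (calG D) = 2 ^ ((r + 2) * CARD('n))"
    using card_calG[OF symmetric] by (simp add: card_D power_add[symmetric] algebra_simps)
qed

end
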